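(* For $1\le k\le n$ let $U^k=U^{\Phi_k\times\Psi}$ and $\widetilde U^k=U^{\widetilde\Phi_k\times\Psi}$ (so $\widetilde U^k\subset U^k$), and let $F^k$ be the orthogonal complement of $\widetilde U^k$ in $U^k$ (with respect to the standard inner product on $\mathbb{R}^{S_n}$). Then the subspaces $F^k$, $2\le k\le n$, are pairwise orthogonal, and each is orthogonal to the all-ones vector $\mathbf{1}$.
   Context: $S_n$ is the group of permutations of $\{1,\ldots,n\}$. For partitions $\mathcal{R}=(R_i)$, $\mathcal{C}=(C_j)$ of $\{1,\ldots,n\}$, the product partition $\mathcal{B}=\mathcal{R}\times\mathcal{C}=(R_i\times C_j)$ has marginal $|\pi_{\mathcal{B}}|=(t_{ij})$, $t_{ij}=|\{s:(s,\pi(s))\in R_i\times C_j\}|$; $U^{\mathcal{B}}=\{v\in\mathbb{R}^{S_n}: |\pi_{\mathcal{B}}|=|\sigma_{\mathcal{B}}|\Rightarrow v(\pi)=v(\sigma)\}$. Bold sections: $\Phi_k=(\{1,\ldots,k-1\},\{k\},\{k+1,\ldots,n\})$, $1\le k\le n$ (empty blocks omitted). Thin sections: $\widetilde\Phi_k=(\{1,\ldots,k\},\{k+1,\ldots,n\})$ for $1\le k\le n-1$, and $\widetilde\Phi_n=(\{1,\ldots,n\})$. Full partition: $\Psi=(\{1\},\ldots,\{n\})$. *)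

theory Defs
  imports Complex_Main "HOL-Combinatorics.Permutations"
begin

definition Sn :: "nat \<Rightarrow> (nat \<Rightarrow> nat) set" where
  "Sn n = {p. p permutes {1..n}}"

text \<open>R^{S_n}: real functions on permutations, vanishing outside S_n.\<close>
definition vecs :: "nat \<Rightarrow> ((nat \<Rightarrow> nat) \<Rightarrow> real) set" where
  "vecs n = {v. \<forall>p. p \<notin> Sn n \<longrightarrow> v p = 0}"

definition ip :: "nat \<Rightarrow> ((nat \<Rightarrow> nat) \<Rightarrow> real) \<Rightarrow> ((nat \<Rightarrow> nat) \<Rightarrow> real) \<Rightarrow> real" where
  "ip n v w = (\<Sum>p\<in>Sn n. v p * w p)"

definition ones :: "nat \<Rightarrow> (nat \<Rightarrow> nat) \<Rightarrow> real" where
  "ones n = (\<lambda>p. if p \<in> Sn n then 1 else 0)"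

text \<open>Partitions are ordered lists of blocks. Marginal |pi_B| of the product
  partition R x C: matrix t_ij = #{s in {1..n}. s in R_i and pi s in C_j}.\<close>
definition marginal :: "nat \<Rightarrow> nat set list \<Rightarrow> nat set list \<Rightarrow> (nat \<Rightarrow> nat) \<Rightarrow> nat list list" where
  "marginal n R C p = map (\<lambda>Ri. map (\<lambda>Cj. card {s\<in>{1..n}. s \<in> Ri \<and> p s \<in> Cj}) C) R"

definition U :: "nat \<Rightarrow> nat set list \<Rightarrow> nat set list \<Rightarrow> ((nat \<Rightarrow> nat) \<Rightarrow> real) set" where
  "U n R C = {v \<in> vecs n. \<forall>p\<in>Sn n. \<forall>q\<in>Sn n.
      marginal n R C p = marginal n R C q \<longrightarrow> v p = v q}"

definition Phi :: "nat \<Rightarrow> nat \<Rightarrow> nat set list" where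
  "Phi n k = filter (\<lambda>B. B \<noteq> {}) [{1..<k}, {k}, {k+1..n}]"

definition Phit :: "nat \<Rightarrow> nat \<Rightarrow> nat set list" where
  "Phit n k = filter (\<lambda>B. B \<noteq> {}) [{1..k}, {k+1..n}]"

definition Psi :: "nat \<Rightarrow> nat set list" where
  "Psi n = map (\<lambda>i. {i}) [1..<n+1]"

definition Uk :: "nat \<Rightarrow> nat \<Rightarrow> ((nat \<Rightarrow> nat) \<Rightarrow> real) set" where
  "Uk n k = U n (Phi n k) (Psi n)"

definition Utk :: "nat \<Rightarrow> nat \<Rightarrow> ((nat \<Rightarrow> nat) \<Rightarrow> real) set" where
  "Utk n k = U n (Phit n k) (Psi n)"

definition Fk :: "nat \<Rightarrow> nat \<Rightarrow> ((nat \<Rightarrow> nat) \<Rightarrow> real) set" where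
  "Fk n k = {v \<in> Uk n k. \<forall>w\<in>Utk n k. ip n v w = 0}"

end

theory Submission
  imports Defs
begin

(* For blocks contained in {1..n}, two permutations have the same
   marginal against the full partition Psi iff they map every block onto the same
   image.  Hence a vector in U^k is invariant under right multiplication by
   permutations of {1..<k} and of {k+1..n}, and a vector invariant under right
   multiplication by permutations of {1..k} and of {k+1..n} lies in the thin
   space U~^k.

   Let k < l, v in F^k and w in U^l.  Average w over right multiplication by the
   permutations of {k+1..n}.  The average u is invariant under those permutations,
   and it stays invariant under permutations of {1..k} (they commute with the
   former and w is invariant under them because {1..k} lies inside {1..<l}); so
   u lies in U~^k and <v,u> = 0.  Since v itself is invariant under permutations
   of {k+1..n}, <v,u> = <v,w>.  This gives pairwise orthogonality; orthogonality
   to the all-ones vector holds because 1 lies in every U~^k. *)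

lemma card_block_fiber:
  assumes p: "p permutes {1..n}" and B: "B \<subseteq> {1..n}"
  shows "card {s\<in>{1..n}. s \<in> B \<and> p s \<in> {j}} = (if j \<in> p ` B then 1 else 0)"
proof (cases "j \<in> p ` B")
  case True
  then obtain b where b: "b \<in> B" "j = p b" by auto
  have "{s\<in>{1..n}. s \<in> B \<and> p s \<in> {j}} = {b}"
    using b B permutes_inj[OF p] by (auto dest: injD)
  then show ?thesis using True by simp
next
  case False
  then have "{s\<in>{1..n}. s \<in> B \<and> p s \<in> {j}} = {}" using B by auto
  then show ?thesis using False by (simp only: card.empty) simp
qed

lemma marginal_Psi_eq_iff:
  assumes p: "p \<in> Sn n" and q: "q \<in> Sn n" and R: "\<forall>B\<in>set R. B \<subseteq> {1..n}"
  shows "marginal n R (Psi n) p = marginal n R (Psi n) q \<longleftrightarrow> (\<forall>B\<in>set R. p ` B = q ` B)"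
proof -
  have pp: "p permutes {1..n}" and qp: "q permutes {1..n}" using p q by (auto simp: Sn_def)
  have Psi: "set (Psi n) = (\<lambda>j. {j}) ` {1..n}"
    unfolding Psi_def by (auto simp: atLeastLessThanSuc_atLeastAtMost)
  have "marginal n R (Psi n) p = marginal n R (Psi n) q \<longleftrightarrow>
     (\<forall>B\<in>set R. \<forall>j\<in>{1..n}. card {s\<in>{1..n}. s \<in> B \<and> p s \<in> {j}}
                              = card {s\<in>{1..n}. s \<in> B \<and> q s \<in> {j}})"
    unfolding marginal_def map_eq_conv Psi by simp
  also have "\<dots> \<longleftrightarrow> (\<forall>B\<in>set R. \<forall>j\<in>{1..n}. (j \<in> p ` B) = (j \<in> q ` B))"
  proof (intro ball_cong refl)
    fix B j assume "B \<in> set R"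
    then have B: "B \<subseteq> {1..n}" using R by blast
    show "card {s\<in>{1..n}. s \<in> B \<and> p s \<in> {j}} = card {s\<in>{1..n}. s \<in> B \<and> q s \<in> {j}}
      \<longleftrightarrow> (j \<in> p ` B) = (j \<in> q ` B)"
      unfolding card_block_fiber[OF pp B] card_block_fiber[OF qp B] by simp
  qed
  also have "\<dots> \<longleftrightarrow> (\<forall>B\<in>set R. p ` B = q ` B)"
  proof (intro ball_cong refl)
    fix B assume "B \<in> set R"
    then have "p ` B \<subseteq> {1..n}" "q ` B \<subseteq> {1..n}"
      using R permutes_image[OF pp] permutes_image[OF qp] by blast+
    then show "(\<forall>j\<in>{1..n}. (j \<in> p ` B) = (j \<in> q ` B)) \<longleftrightarrow> p ` B = q ` B"
      by blast
  qed
  finally show ?thesis .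
qed

lemma U_Psi_iff:
  assumes "\<forall>B\<in>set R. B \<subseteq> {1..n}"
  shows "v \<in> U n R (Psi n) \<longleftrightarrow> v \<in> vecs n \<and>
           (\<forall>p\<in>Sn n. \<forall>q\<in>Sn n. (\<forall>B\<in>set R. p ` B = q ` B) \<longrightarrow> v p = v q)"
  unfolding U_def using marginal_Psi_eq_iff[OF _ _ assms] by auto

definition right_invariant :: "nat \<Rightarrow> nat set \<Rightarrow> ((nat \<Rightarrow> nat) \<Rightarrow> real) \<Rightarrow> bool" where
  "right_invariant n S v \<longleftrightarrow> (\<forall>p\<in>Sn n. \<forall>\<sigma>. \<sigma> permutes S \<longrightarrow> v (p \<circ> \<sigma>) = v p)"

lemma Sn_comp_permutes:
  "p \<in> Sn n \<Longrightarrow> \<sigma> permutes S \<Longrightarrow> S \<subseteq> {1..n} \<Longrightarrow> p \<circ> \<sigma> \<in> Sn n"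
  unfolding Sn_def using permutes_compose permutes_subset by blast

lemma image_comp_permutes:
  assumes "\<sigma> permutes S" "S \<subseteq> B \<or> B \<inter> S = {}"
  shows "(p \<circ> \<sigma>) ` B = p ` B"
proof -
  have "\<sigma> ` B = B"
  proof (cases "S \<subseteq> B")
    case True
    show ?thesis by (rule permutes_image[OF permutes_subset[OF assms(1) True]])
  next
    case False
    then have "B \<inter> S = {}" using assms(2) by blast
    then have "\<forall>x\<in>B. \<sigma> x = x" using permutes_not_in[OF assms(1)] by blast
    then show ?thesis by simp
  qed
  then show ?thesis by (metis image_comp)
qed

lemma U_Psi_right_invariant:
  assumes R: "\<forall>B\<in>set R. B \<subseteq> {1..n}" and v: "v \<in> U n R (Psi n)"
    and S: "S \<subseteq> {1..n}" "\<forall>B\<in>set R. S \<subseteq> B \<or> B \<inter> S = {}"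
  shows "right_invariant n S v"
  unfolding right_invariant_def
proof (intro ballI allI impI)
  fix p \<sigma> assume p: "p \<in> Sn n" and \<sigma>: "\<sigma> permutes S"
  have const: "\<forall>p\<in>Sn n. \<forall>q\<in>Sn n. (\<forall>B\<in>set R. p ` B = q ` B) \<longrightarrow> v p = v q"
    using v unfolding U_Psi_iff[OF R] by (rule conjunct2)
  have "\<forall>B\<in>set R. (p \<circ> \<sigma>) ` B = p ` B"
  proof
    fix B assume "B \<in> set R"
    then show "(p \<circ> \<sigma>) ` B = p ` B" using S(2) by (intro image_comp_permutes[OF \<sigma>]) blast
  qed
  then show "v (p \<circ> \<sigma>) = v p"
    using const Sn_comp_permutes[OF p \<sigma> S(1)] p by blast
qed

lemma Uk_right_invariant:
  assumes k: "1 \<le> k" "k \<le> n" and v: "v \<in> Uk n k"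
    and S: "S \<subseteq> {1..<k} \<or> S \<subseteq> {k+1..n}"
  shows "right_invariant n S v"
proof (rule U_Psi_right_invariant)
  show "\<forall>B\<in>set (Phi n k). B \<subseteq> {1..n}" using k by (auto simp: Phi_def)
  show "S \<subseteq> {1..n}" using S k by auto
  have "{1..<k} \<inter> {k+1..n} = {}" "k \<notin> {1..<k}" "k \<notin> {k+1..n}" by auto
  then show "\<forall>B\<in>set (Phi n k). S \<subseteq> B \<or> B \<inter> S = {}"
    using S unfolding Phi_def by (auto simp del: atLeastLessThan_iff atLeastAtMost_iff)
qed (use v in \<open>simp add: Uk_def\<close>)

lemma permutes_split_invariant_block:
  assumes \<rho>: "\<rho> permutes A \<union> B" and AB: "A \<inter> B = {}" and \<rho>A: "\<rho> ` A = A"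
  shows "restrict_id \<rho> A permutes A" "restrict_id \<rho> B permutes B"
    and "\<rho> = restrict_id \<rho> A \<circ> restrict_id \<rho> B"
proof -
  have inj: "inj \<rho>" using permutes_inj[OF \<rho>] .
  have "B = (A \<union> B) - A" using AB by blast
  then have "\<rho> ` B = \<rho> ` (A \<union> B) - \<rho> ` A" using image_set_diff[OF inj] by metis
  then have \<rho>B: "\<rho> ` B = B" using permutes_image[OF \<rho>] \<rho>A AB by auto
  have "inj_on \<rho> A" "inj_on \<rho> B" using inj by (metis inj_on_subset subset_UNIV)+
  then show "restrict_id \<rho> A permutes A" "restrict_id \<rho> B permutes B"
    using \<rho>A \<rho>B by (auto intro!: permutes_restrict_id simp: bij_betw_def)
  show "\<rho> = restrict_id \<rho> A \<circ> restrict_id \<rho> B"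
  proof
    fix x
    show "\<rho> x = (restrict_id \<rho> A \<circ> restrict_id \<rho> B) x"
    proof (cases "x \<in> B")
      case True
      then have "\<rho> x \<notin> A" using \<rho>B AB by blast
      then show ?thesis using True by simp
    next
      case False
      then show ?thesis using AB permutes_not_in[OF \<rho>, of x] by (cases "x \<in> A") auto
    qed
  qed
qed

lemma Utk_of_right_invariant:
  assumes k: "k \<le> n" and u: "u \<in> vecs n"
    and lower: "right_invariant n {1..k} u" and upper: "right_invariant n {k+1..n} u"
  shows "u \<in> Utk n k"
proof -
  have R: "\<forall>B\<in>set (Phit n k). B \<subseteq> {1..n}" using k by (auto simp: Phit_def)
  have "u p = u q" if p: "p \<in> Sn n" and q: "q \<in> Sn n"
    and pq: "\<forall>B\<in>set (Phit n k). p ` B = q ` B" for p q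
  proof -
    have pp: "p permutes {1..n}" and qp: "q permutes {1..n}" using p q by (auto simp: Sn_def)
    have low: "p ` {1..k} = q ` {1..k}" using pq by (cases "k = 0") (auto simp: Phit_def)
    define \<rho> where "\<rho> = inv p \<circ> q"
    have "{1..k} \<union> {k+1..n} = {1..n}" using k by auto
    then have \<rho>: "\<rho> permutes {1..k} \<union> {k+1..n}"
      unfolding \<rho>_def using permutes_compose[OF qp permutes_inv[OF pp]] by simp
    have q_eq: "q = p \<circ> \<rho>" unfolding \<rho>_def by (simp add: o_assoc permutes_inv_o[OF pp])
    have "\<rho> ` {1..k} = {1..k}"
      unfolding \<rho>_def image_comp[symmetric] low[symmetric]
      by (simp add: image_comp permutes_inv_o(2)[OF pp])
    then have split: "restrict_id \<rho> {1..k} permutes {1..k}" "restrict_id \<rho> {k+1..n} permutes {k+1..n}"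
      "\<rho> = restrict_id \<rho> {1..k} \<circ> restrict_id \<rho> {k+1..n}"
      using permutes_split_invariant_block[OF \<rho>] by auto
    have p\<tau>: "p \<circ> restrict_id \<rho> {1..k} \<in> Sn n" using Sn_comp_permutes[OF p split(1)] k by auto
    have "u q = u ((p \<circ> restrict_id \<rho> {1..k}) \<circ> restrict_id \<rho> {k+1..n})"
      using q_eq split(3) by (metis comp_assoc)
    also have "\<dots> = u (p \<circ> restrict_id \<rho> {1..k})"
      using upper p\<tau> split(2) unfolding right_invariant_def by blast
    also have "\<dots> = u p" using lower p split(1) unfolding right_invariant_def by blast
    finally show ?thesis by simp
  qed
  then show ?thesis unfolding Utk_def U_Psi_iff[OF R] using u by blast
qed

lemma permutes_disjoint_commute:
  assumes \<tau>: "\<tau> permutes A" and \<sigma>: "\<sigma> permutes B" and AB: "A \<inter> B = {}"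
  shows "\<tau> \<circ> \<sigma> = \<sigma> \<circ> \<tau>"
proof
  fix x
  have \<tau>A: "\<tau> x \<in> A \<longleftrightarrow> x \<in> A" and \<sigma>B: "\<sigma> x \<in> B \<longleftrightarrow> x \<in> B"
    using permutes_in_image[OF \<tau>] permutes_in_image[OF \<sigma>] by blast+
  show "(\<tau> \<circ> \<sigma>) x = (\<sigma> \<circ> \<tau>) x"
    using AB \<tau>A \<sigma>B permutes_not_in[OF \<tau>] permutes_not_in[OF \<sigma>]
    by (cases "x \<in> A"; cases "x \<in> B") (auto simp: disjoint_iff)
qed

definition right_average :: "nat \<Rightarrow> nat set \<Rightarrow> ((nat \<Rightarrow> nat) \<Rightarrow> real) \<Rightarrow> (nat \<Rightarrow> nat) \<Rightarrow> real" where
  "right_average n S w = (\<lambda>p. if p \<in> Sn n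
     then (\<Sum>\<sigma>\<in>{\<sigma>. \<sigma> permutes S}. w (p \<circ> \<sigma>)) / real (card {\<sigma>. \<sigma> permutes S}) else 0)"

lemma right_average_vecs: "right_average n S w \<in> vecs n"
  unfolding vecs_def right_average_def by simp

lemma right_average_invariant:
  assumes S: "S \<subseteq> {1..n}"
  shows "right_invariant n S (right_average n S w)"
  unfolding right_invariant_def
proof (intro ballI allI impI)
  fix p \<tau> assume p: "p \<in> Sn n" and \<tau>: "\<tau> permutes S"
  have "(\<Sum>\<sigma>\<in>{\<sigma>. \<sigma> permutes S}. w (p \<circ> \<sigma>)) = (\<Sum>\<sigma>\<in>{\<sigma>. \<sigma> permutes S}. w (p \<circ> (\<tau> \<circ> \<sigma>)))"
    by (rule setum_permutations_compose_left[OF \<tau>])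
  then show "right_average n S w (p \<circ> \<tau>) = right_average n S w p"
    using p Sn_comp_permutes[OF p \<tau> S] by (simp add: right_average_def o_assoc)
qed

lemma right_average_preserves_invariance:
  assumes S: "S \<subseteq> {1..n}" and A: "A \<subseteq> {1..n}" and AS: "A \<inter> S = {}"
    and w: "right_invariant n A w"
  shows "right_invariant n A (right_average n S w)"
  unfolding right_invariant_def
proof (intro ballI allI impI)
  fix p \<tau> assume p: "p \<in> Sn n" and \<tau>: "\<tau> permutes A"
  have "w (p \<circ> \<tau> \<circ> \<sigma>) = w (p \<circ> \<sigma>)" if \<sigma>: "\<sigma> permutes S" for \<sigma>
  proof -
    have "p \<circ> \<tau> \<circ> \<sigma> = (p \<circ> \<sigma>) \<circ> \<tau>"
      using permutes_disjoint_commute[OF \<tau> \<sigma> AS] by (simp add: comp_assoc)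
    then show ?thesis using w Sn_comp_permutes[OF p \<sigma> S] \<tau> unfolding right_invariant_def by simp
  qed
  moreover have "p \<circ> \<tau> \<in> Sn n" using Sn_comp_permutes[OF p \<tau> A] .
  ultimately show "right_average n S w (p \<circ> \<tau>) = right_average n S w p"
    using p by (simp add: right_average_def)
qed

lemma ip_right_average:
  assumes S: "S \<subseteq> {1..n}" and v: "right_invariant n S v"
  shows "ip n v (right_average n S w) = ip n v w"
proof -
  let ?T = "{\<sigma>. \<sigma> permutes S}"
  have "finite ?T" using finite_permutations finite_subset[OF S] by blast
  moreover have "id \<in> ?T" by (simp add: permutes_id)
  ultimately have card_T: "real (card ?T) \<noteq> 0" by (metis card_0_eq empty_iff of_nat_0_eq_iff)
  have shifted: "(\<Sum>p\<in>Sn n. v p * w (p \<circ> \<sigma>)) = ip n v w" if \<sigma>: "\<sigma> permutes S" for \<sigma>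
  proof -
    have \<sigma>n: "\<sigma> permutes {1..n}" using permutes_subset[OF \<sigma> S] .
    have "(\<Sum>p\<in>Sn n. v p * w (p \<circ> \<sigma>)) = (\<Sum>p\<in>Sn n. v (p \<circ> \<sigma>) * w (p \<circ> \<sigma>))"
      using v \<sigma> unfolding right_invariant_def by (intro sum.cong) auto
    also have "\<dots> = ip n v w"
      unfolding ip_def Sn_def
      by (rule sum_permutations_compose_right[OF \<sigma>n, of "\<lambda>p. v p * w p", symmetric])
    finally show ?thesis .
  qed
  have "ip n v (right_average n S w) = (\<Sum>p\<in>Sn n. \<Sum>\<sigma>\<in>?T. v p * w (p \<circ> \<sigma>)) / real (card ?T)"
    unfolding ip_def sum_divide_distrib
    by (intro sum.cong) (auto simp: right_average_def sum_distrib_left sum_divide_distrib)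
  also have "\<dots> = (\<Sum>\<sigma>\<in>?T. \<Sum>p\<in>Sn n. v p * w (p \<circ> \<sigma>)) / real (card ?T)"
    by (subst sum.swap) (rule refl)
  also have "\<dots> = ip n v w"
    using card_T shifted by simp
  finally show ?thesis .
qed

lemma Fk_orthogonal_Uk:
  assumes kl: "1 \<le> k" "k < l" "l \<le> n" and v: "v \<in> Fk n k" and w: "w \<in> Uk n l"
  shows "ip n v w = 0"
proof -
  let ?S = "{k+1..n}"
  have S: "?S \<subseteq> {1..n}" and low: "{1..k} \<subseteq> {1..n}" using kl by auto
  have vU: "v \<in> Uk n k" and v_orth: "\<forall>u\<in>Utk n k. ip n v u = 0"
    using v by (auto simp: Fk_def)
  have v_inv: "right_invariant n ?S v"
    using Uk_right_invariant[OF kl(1) _ vU] kl by auto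
  have "{1..k} \<subseteq> {1..<l}" using kl by auto
  then have w_inv: "right_invariant n {1..k} w"
    using Uk_right_invariant[OF _ kl(3) w, of "{1..k}"] kl by simp
  have "right_average n ?S w \<in> Utk n k"
  proof (rule Utk_of_right_invariant)
    show "right_invariant n {1..k} (right_average n ?S w)"
      by (rule right_average_preserves_invariance[OF S low _ w_inv]) auto
    show "right_invariant n ?S (right_average n ?S w)"
      by (rule right_average_invariant[OF S])
  qed (use kl in \<open>auto simp: right_average_vecs\<close>)
  then have "ip n v (right_average n ?S w) = 0" using v_orth by blast
  then show ?thesis using ip_right_average[OF S v_inv] by simp
qed

lemma ip_commute: "ip n v w = ip n w v"
  unfolding ip_def by (simp add: mult.commute)

theorem lemma5:
  fixes n :: nat
  shows "(\<forall>k l v w. 2 \<le> k \<and> k \<le> n \<and> 2 \<le> l \<and> l \<le> n \<and> k \<noteq> l \<and>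
            v \<in> Fk n k \<and> w \<in> Fk n l \<longrightarrow> ip n v w = 0)
       \<and> (\<forall>k v. 2 \<le> k \<and> k \<le> n \<and> v \<in> Fk n k \<longrightarrow> ip n v (ones n) = 0)"
proof (intro conjI allI impI)
  fix k l v w
  assume h: "2 \<le> k \<and> k \<le> n \<and> 2 \<le> l \<and> l \<le> n \<and> k \<noteq> l \<and> v \<in> Fk n k \<and> w \<in> Fk n l"
  then have vU: "v \<in> Uk n k" and wU: "w \<in> Uk n l" by (auto simp: Fk_def)
  consider "k < l" | "l < k" using h by linarith
  then show "ip n v w = 0"
  proof cases
    case 1
    then show ?thesis using Fk_orthogonal_Uk[of k l n v w] h wU by simp
  next
    case 2
    then have "ip n w v = 0" using Fk_orthogonal_Uk[of l k n w v] h vU by simp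
    then show ?thesis by (simp add: ip_commute)
  qed
next
  fix k v
  assume h: "2 \<le> k \<and> k \<le> n \<and> v \<in> Fk n k"
  have "ones n \<in> Utk n k" unfolding Utk_def U_def vecs_def ones_def by simp
  then show "ip n v (ones n) = 0" using h by (simp add: Fk_def)
qed

end
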